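(* For every $d\ge 2$, $\mu(Q_d)\le 2\,\mu(Q_{d-1})$.
   Context: $Q_d$ is the hypercube with vertex set $\{0,1\}^d$, two vertices adjacent iff their strings differ in exactly one bit. For a connected graph $G$ and $X\subseteq V(G)$, two vertices $x,y$ are $X$-visible if some shortest $x,y$-path has no internal vertex in $X$. $X$ is a mutual-visibility set if every two vertices of $X$ are $X$-visible; $\mu(G)$ is the maximum cardinality of a mutual-visibility set of $G$. *)

theory Defs
  imports Main
begin

definition is_walk :: "'a set \<Rightarrow> ('a \<Rightarrow> 'a \<Rightarrow> bool) \<Rightarrow> 'a list \<Rightarrow> bool" where
  "is_walk V E p \<longleftrightarrow> p \<noteq> [] \<and> set p \<subseteq> V \<and> (\<forall>i. Suc i < length p \<longrightarrow> E (p ! i) (p ! Suc i))"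

definition walk_between :: "'a set \<Rightarrow> ('a \<Rightarrow> 'a \<Rightarrow> bool) \<Rightarrow> 'a \<Rightarrow> 'a \<Rightarrow> 'a list \<Rightarrow> bool" where
  "walk_between V E x y p \<longleftrightarrow> is_walk V E p \<and> hd p = x \<and> last p = y"

definition gdist :: "'a set \<Rightarrow> ('a \<Rightarrow> 'a \<Rightarrow> bool) \<Rightarrow> 'a \<Rightarrow> 'a \<Rightarrow> nat" where
  "gdist V E x y = (LEAST n. \<exists>p. walk_between V E x y p \<and> length p = Suc n)"

definition shortest_path :: "'a set \<Rightarrow> ('a \<Rightarrow> 'a \<Rightarrow> bool) \<Rightarrow> 'a \<Rightarrow> 'a \<Rightarrow> 'a list \<Rightarrow> bool" where
  "shortest_path V E x y p \<longleftrightarrow> walk_between V E x y p \<and> length p = Suc (gdist V E x y)"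

definition visible :: "'a set \<Rightarrow> ('a \<Rightarrow> 'a \<Rightarrow> bool) \<Rightarrow> 'a set \<Rightarrow> 'a \<Rightarrow> 'a \<Rightarrow> bool" where
  "visible V E X x y \<longleftrightarrow> (\<exists>p. shortest_path V E x y p \<and> set (butlast (tl p)) \<inter> X = {})"

definition mutual_visibility_set :: "'a set \<Rightarrow> ('a \<Rightarrow> 'a \<Rightarrow> bool) \<Rightarrow> 'a set \<Rightarrow> bool" where
  "mutual_visibility_set V E X \<longleftrightarrow> X \<subseteq> V \<and> (\<forall>x\<in>X. \<forall>y\<in>X. visible V E X x y)"

definition mu :: "'a set \<Rightarrow> ('a \<Rightarrow> 'a \<Rightarrow> bool) \<Rightarrow> nat" where
  "mu V E = Max (card ` {X. mutual_visibility_set V E X})"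

definition hypercube_vertices :: "nat \<Rightarrow> bool list set" where
  "hypercube_vertices d = {xs. length xs = d}"

definition hypercube_adj :: "bool list \<Rightarrow> bool list \<Rightarrow> bool" where
  "hypercube_adj xs ys \<longleftrightarrow> length xs = length ys \<and> card {i. i < length xs \<and> xs ! i \<noteq> ys ! i} = 1"

definition mu_hypercube :: "nat \<Rightarrow> nat" where
  "mu_hypercube d = mu (hypercube_vertices d) hypercube_adj"

end

theory Submission
  imports Defs
begin

text \<open>The graph distance of Q_d is the Hamming distance. If x and y agree in the first bit, then
  every vertex u on a shortest x,y-path satisfies h(x,u) + h(u,y) = h(x,y), which forces u to
  agree with x and y in that bit as well. Hence shortest paths between two vertices of the same
  half of Q_d stay in that half, and deleting the first bit maps them to shortest paths of
  Q_{d-1}. So each half of a mutual-visibility set of Q_d becomes, after deleting the first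
  bit, a mutual-visibility set of Q_{d-1} of the same size, and the two halves give the bound.\<close>

lemma is_walk_Cons:
  "is_walk V E (x # p) \<longleftrightarrow> x \<in> V \<and> (p = [] \<or> E x (hd p) \<and> is_walk V E p)"
proof (cases p)
  case (Cons y q)
  have "(\<forall>i. Suc i < length (x # p) \<longrightarrow> E ((x # p) ! i) ((x # p) ! Suc i)) \<longleftrightarrow>
        E x y \<and> (\<forall>i. Suc i < length p \<longrightarrow> E (p ! i) (p ! Suc i))"
    using Cons by (auto simp: All_less_Suc2 simp del: nth_Cons_Suc)
  then show ?thesis
    using Cons by (auto simp: is_walk_def)
qed (simp add: is_walk_def)

lemma is_walk_append_split:
  "is_walk V E (a @ v # b) \<Longrightarrow> is_walk V E (a @ [v]) \<and> is_walk V E (v # b)"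
proof (induction a)
  case (Cons x a)
  then show ?case
    by (cases a) (auto simp: is_walk_Cons)
qed (simp add: is_walk_Cons)

lemma walk_between_in_vertices:
  assumes "walk_between V E x y p"
  shows "x \<in> V" "y \<in> V" "set p \<subseteq> V"
  using assms hd_in_set last_in_set by (fastforce simp: walk_between_def is_walk_def)+

lemma finite_mutual_visibility_sets:
  assumes "finite V"
  shows "finite {X. mutual_visibility_set V E X}"
proof (rule finite_subset)
  show "{X. mutual_visibility_set V E X} \<subseteq> Pow V"
    by (auto simp: mutual_visibility_set_def)
qed (use assms in simp)

lemma mutual_visibility_set_card_le_mu:
  assumes "finite V" "mutual_visibility_set V E X"
  shows "card X \<le> mu V E"
  unfolding mu_def using assms finite_mutual_visibility_sets by (intro Max_ge) auto

lemma mu_attained: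
  assumes "finite V"
  obtains X where "mutual_visibility_set V E X" "card X = mu V E"
proof -
  have "mutual_visibility_set V E {}"
    by (simp add: mutual_visibility_set_def)
  then have "mu V E \<in> card ` {X. mutual_visibility_set V E X}"
    unfolding mu_def using finite_mutual_visibility_sets[OF assms] by (intro Max_in) auto
  then show ?thesis
    using that by auto
qed

fun hamming :: "bool list \<Rightarrow> bool list \<Rightarrow> nat" where
  "hamming (a # as) (b # bs) = (if a = b then 0 else 1) + hamming as bs"
| "hamming _ _ = 0"

lemma hamming_eq_card:
  "length xs = length ys \<Longrightarrow> hamming xs ys = card {i. i < length xs \<and> xs ! i \<noteq> ys ! i}"
proof (induction xs ys rule: hamming.induct)
  case (1 a as b bs)
  have "{i. i < length (a # as) \<and> (a # as) ! i \<noteq> (b # bs) ! i} =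
        (if a = b then {} else {0}) \<union> Suc ` {i. i < length as \<and> as ! i \<noteq> bs ! i}"
    by (auto simp: less_Suc_eq_0_disj)
  then show ?case
    using 1 by (simp add: card_image)
qed auto

lemma hypercube_adj_iff_hamming:
  "hypercube_adj xs ys \<longleftrightarrow> length xs = length ys \<and> hamming xs ys = 1"
  unfolding hypercube_adj_def using hamming_eq_card by auto

lemma hamming_self [simp]: "hamming x x = 0"
  by (induction x) auto

lemma hypercube_adj_Cons_Cons_same [simp]:
  "hypercube_adj (c # xs) (c # ys) \<longleftrightarrow> hypercube_adj xs ys"
  by (simp add: hypercube_adj_iff_hamming)

lemma hamming_triangle:
  "length x = length y \<Longrightarrow> length y = length z \<Longrightarrow> hamming x z \<le> hamming x y + hamming y z"
proof (induction x y arbitrary: z rule: hamming.induct)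
  case (1 a as b bs)
  then obtain c cs where "z = c # cs"
    by (cases z) auto
  with 1 have "hamming as cs \<le> hamming as bs + hamming bs cs"
    by simp
  then show ?case
    unfolding \<open>z = c # cs\<close> by (cases a; cases b; cases c) auto
qed auto

lemma hamming_le_walk_length:
  "is_walk (hypercube_vertices n) hypercube_adj p \<Longrightarrow> hamming (hd p) (last p) \<le> length p - 1"
proof (induction p)
  case (Cons x p)
  show ?case
  proof (cases p)
    case (Cons y q)
    have walk: "is_walk (hypercube_vertices n) hypercube_adj p" and "hypercube_adj x y"
      using Cons.prems Cons by (auto simp: is_walk_Cons)
    moreover have "y \<in> hypercube_vertices n" "last p \<in> hypercube_vertices n"
      using walk Cons by (auto simp: is_walk_def)
    ultimately have "hamming x (last p) \<le> hamming x y + hamming y (last p)"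
      by (intro hamming_triangle) (auto simp: hypercube_adj_iff_hamming hypercube_vertices_def)
    also have "\<dots> \<le> 1 + (length p - 1)"
      using Cons.IH[OF walk] \<open>hypercube_adj x y\<close> Cons by (auto simp: hypercube_adj_iff_hamming)
    finally show ?thesis
      using Cons by simp
  qed simp
qed (simp add: is_walk_def)

lemma is_walk_map_Cons:
  "is_walk (hypercube_vertices n) hypercube_adj p \<Longrightarrow>
   is_walk (hypercube_vertices (Suc n)) hypercube_adj (map (Cons c) p)"
proof (induction p)
  case (Cons u q)
  have "u \<in> hypercube_vertices n"
    using Cons.prems by (simp add: is_walk_Cons)
  moreover have "hypercube_adj (c # u) (c # hd q) \<and>
      is_walk (hypercube_vertices (Suc n)) hypercube_adj (map (Cons c) q)" if "q \<noteq> []"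
    using Cons that by (simp add: is_walk_Cons)
  ultimately show ?case
    by (subst list.map, subst is_walk_Cons) (auto simp: hd_map hypercube_vertices_def)
qed (simp add: is_walk_def)

lemma walk_of_length_hamming:
  "length x = length y \<Longrightarrow>
   \<exists>p. walk_between (hypercube_vertices (length x)) hypercube_adj x y p \<and> length p = Suc (hamming x y)"
proof (induction x y rule: hamming.induct)
  case (1 a as b bs)
  then obtain p where p: "walk_between (hypercube_vertices (length as)) hypercube_adj as bs p"
    "length p = Suc (hamming as bs)"
    by auto
  have "p \<noteq> []"
    using p by (auto simp: walk_between_def is_walk_def)
  have walk: "is_walk (hypercube_vertices (Suc (length as))) hypercube_adj (map (Cons c) p)" for c
    using is_walk_map_Cons p by (auto simp: walk_between_def)
  show ?case
  proof (cases "a = b")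
    case True
    then show ?thesis
      using p walk[of a] \<open>p \<noteq> []\<close>
      by (intro exI[of _ "map (Cons a) p"]) (auto simp: walk_between_def hd_map last_map)
  next
    case False
    have "hd (map (Cons b) p) = b # as"
      using p \<open>p \<noteq> []\<close> by (auto simp: walk_between_def hd_map)
    then have "is_walk (hypercube_vertices (Suc (length as))) hypercube_adj ((a # as) # map (Cons b) p)"
      using walk[of b] False 1 \<open>p \<noteq> []\<close>
      by (subst is_walk_Cons) (auto simp: hypercube_vertices_def hypercube_adj_iff_hamming)
    then show ?thesis
      using p \<open>p \<noteq> []\<close> False
      by (intro exI[of _ "(a # as) # map (Cons b) p"]) (auto simp: walk_between_def last_map)
  qed
qed (rule exI[of _ "[[]]"], simp add: walk_between_def is_walk_def hypercube_vertices_def)+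

lemma gdist_hypercube:
  assumes "x \<in> hypercube_vertices n" "y \<in> hypercube_vertices n"
  shows "gdist (hypercube_vertices n) hypercube_adj x y = hamming x y"
  unfolding gdist_def
proof (rule Least_equality)
  show "\<exists>p. walk_between (hypercube_vertices n) hypercube_adj x y p \<and> length p = Suc (hamming x y)"
    using assms walk_of_length_hamming[of x y] by (auto simp: hypercube_vertices_def)
next
  fix m
  assume "\<exists>p. walk_between (hypercube_vertices n) hypercube_adj x y p \<and> length p = Suc m"
  then show "hamming x y \<le> m"
    using hamming_le_walk_length by (fastforce simp: walk_between_def)
qed

lemma hamming_between_Cons_eq:
  assumes "length xs = length vs" "length vs = length ys"
    and "hamming (c # xs) (a # vs) + hamming (a # vs) (c # ys) \<le> hamming (c # xs) (c # ys)"
  shows "a = c"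
  using assms hamming_triangle[of xs vs ys] by (auto split: if_splits)

lemma shortest_path_hypercube_hd:
  assumes sp: "shortest_path (hypercube_vertices (Suc n)) hypercube_adj x y p"
    and "hd x = hd y" and "u \<in> set p"
  shows "hd u = hd x"
proof -
  obtain a b where p: "p = a @ u # b"
    using \<open>u \<in> set p\<close> split_list by metis
  have between: "walk_between (hypercube_vertices (Suc n)) hypercube_adj x y p"
    using sp by (simp add: shortest_path_def)
  note in_V = walk_between_in_vertices[OF between]
  have "is_walk (hypercube_vertices (Suc n)) hypercube_adj (a @ [u])"
    "is_walk (hypercube_vertices (Suc n)) hypercube_adj (u # b)"
    using is_walk_append_split[of _ _ a u b] between by (simp_all add: p walk_between_def)
  moreover have "hd (a @ [u]) = x" "last (u # b) = y"
    using between by (cases a; simp add: p walk_between_def)+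
  ultimately have "hamming x u \<le> length a" "hamming u y \<le> length b"
    using hamming_le_walk_length[of "Suc n" "a @ [u]"] hamming_le_walk_length[of "Suc n" "u # b"]
    by simp_all
  moreover have "length p = Suc (hamming x y)"
    using sp gdist_hypercube[OF in_V(1,2)] by (simp add: shortest_path_def)
  ultimately have geodesic: "hamming x u + hamming u y \<le> hamming x y"
    using p by simp
  have "u \<in> hypercube_vertices (Suc n)"
    using in_V(3) \<open>u \<in> set p\<close> by auto
  then obtain a vs where "u = a # vs" "length vs = n"
    by (cases u) (auto simp: hypercube_vertices_def)
  moreover obtain c xs ys where "x = c # xs" "y = c # ys" "length xs = n" "length ys = n"
    using in_V(1,2) \<open>hd x = hd y\<close> by (cases x; cases y) (auto simp: hypercube_vertices_def)
  ultimately have "a = c"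
    using geodesic by (intro hamming_between_Cons_eq[of xs vs ys]) simp_all
  then show ?thesis
    using \<open>u = a # vs\<close> \<open>x = c # xs\<close> by simp
qed

lemma is_walk_map_tl:
  "is_walk (hypercube_vertices (Suc n)) hypercube_adj p \<Longrightarrow> \<forall>u\<in>set p. hd u = c \<Longrightarrow>
   is_walk (hypercube_vertices n) hypercube_adj (map tl p)"
proof (induction p)
  case (Cons x p)
  have x: "x \<in> hypercube_vertices (Suc n)"
    using Cons.prems by (simp add: is_walk_Cons)
  show ?case
  proof (cases p)
    case (Cons y q)
    have "hypercube_adj x y"
      using Cons.prems(1) Cons by (auto simp: is_walk_Cons)
    moreover obtain x' y' where "x = c # x'" "y = c # y'"
      using Cons.prems(2) Cons x \<open>hypercube_adj x y\<close>
      by (cases x; cases y) (auto simp: hypercube_vertices_def hypercube_adj_iff_hamming)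
    ultimately have "hypercube_adj (tl x) (tl y)"
      by simp
    then show ?thesis
      using Cons.IH Cons.prems Cons x by (auto simp: is_walk_Cons hypercube_vertices_def)
  qed (use x in \<open>simp add: is_walk_Cons hypercube_vertices_def\<close>)
qed (simp add: is_walk_def)

lemma inj_on_tl_same_hd: "inj_on tl {x \<in> hypercube_vertices (Suc n). hd x = c}"
proof (rule inj_onI)
  fix u w
  assume "u \<in> {x \<in> hypercube_vertices (Suc n). hd x = c}"
    "w \<in> {x \<in> hypercube_vertices (Suc n). hd x = c}" "tl u = tl w"
  then show "u = w"
    by (cases u; cases w) (auto simp: hypercube_vertices_def)
qed

lemma shortest_path_map_tl:
  assumes sp: "shortest_path (hypercube_vertices (Suc n)) hypercube_adj (c # xs) (c # ys) p"
  shows "shortest_path (hypercube_vertices n) hypercube_adj xs ys (map tl p)"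
proof -
  have between: "walk_between (hypercube_vertices (Suc n)) hypercube_adj (c # xs) (c # ys) p"
    using sp by (simp add: shortest_path_def)
  note in_V = walk_between_in_vertices[OF between]
  have "\<forall>u\<in>set p. hd u = c"
    using shortest_path_hypercube_hd[OF sp] by simp
  moreover have "p \<noteq> []"
    using between by (auto simp: walk_between_def is_walk_def)
  ultimately have "walk_between (hypercube_vertices n) hypercube_adj xs ys (map tl p)"
    using is_walk_map_tl between by (auto simp: walk_between_def hd_map last_map)
  moreover have "length (map tl p) = Suc (gdist (hypercube_vertices n) hypercube_adj xs ys)"
    using sp in_V gdist_hypercube[OF in_V(1,2)] gdist_hypercube[of xs n ys]
    by (simp add: shortest_path_def hypercube_vertices_def)
  ultimately show ?thesis
    by (simp add: shortest_path_def)
qed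

lemma mutual_visibility_set_hypercube_half:
  assumes mv: "mutual_visibility_set (hypercube_vertices (Suc n)) hypercube_adj X"
  shows "mutual_visibility_set (hypercube_vertices n) hypercube_adj (tl ` {x \<in> X. hd x = c})"
  unfolding mutual_visibility_set_def
proof (intro conjI ballI)
  let ?Y = "tl ` {x \<in> X. hd x = c}"
  have X: "X \<subseteq> hypercube_vertices (Suc n)"
    using mv by (simp add: mutual_visibility_set_def)
  then show "?Y \<subseteq> hypercube_vertices n"
    by (auto simp: hypercube_vertices_def)
  have Cons_in_X: "c # zs \<in> X" if zs: "zs \<in> ?Y" for zs
  proof -
    obtain v where "v \<in> X" "hd v = c" "zs = tl v"
      using zs by blast
    moreover have "v \<noteq> []"
      using \<open>v \<in> X\<close> X by (auto simp: hypercube_vertices_def)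
    ultimately show ?thesis
      by (cases v) simp_all
  qed
  fix xs ys
  assume "xs \<in> ?Y" "ys \<in> ?Y"
  then have "visible (hypercube_vertices (Suc n)) hypercube_adj X (c # xs) (c # ys)"
    using mv Cons_in_X by (simp add: mutual_visibility_set_def)
  then obtain p where sp: "shortest_path (hypercube_vertices (Suc n)) hypercube_adj (c # xs) (c # ys) p"
    and avoids: "set (butlast (tl p)) \<inter> X = {}"
    unfolding visible_def by blast
  have "set (butlast (tl (map tl p))) \<inter> ?Y = {}"
  proof (rule ccontr)
    assume "\<not> ?thesis"
    then obtain u w where u: "u \<in> set (butlast (tl p))" and w: "w \<in> X" "hd w = c"
      and "tl u = tl w"
      by (auto simp: map_butlast[symmetric] map_tl[symmetric])
    have "u \<in> set p"
      using u by (cases p) (auto dest: in_set_butlastD)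
    moreover have "set p \<subseteq> hypercube_vertices (Suc n)"
      using sp walk_between_in_vertices(3)[of _ hypercube_adj "c # xs" "c # ys" p]
      by (simp add: shortest_path_def)
    ultimately have "u \<in> {v \<in> hypercube_vertices (Suc n). hd v = c}"
      using shortest_path_hypercube_hd[OF sp] by auto
    moreover have "w \<in> {v \<in> hypercube_vertices (Suc n). hd v = c}"
      using w X by auto
    ultimately have "u = w"
      using inj_onD[OF inj_on_tl_same_hd \<open>tl u = tl w\<close>] by blast
    then show False
      using u w avoids by blast
  qed
  then show "visible (hypercube_vertices n) hypercube_adj ?Y xs ys"
    using shortest_path_map_tl[OF sp] unfolding visible_def by blast
qed

lemma finite_hypercube_vertices: "finite (hypercube_vertices n)"
  using finite_lists_length_eq[of "UNIV :: bool set" n] by (simp add: hypercube_vertices_def)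

lemma card_hypercube_half_le_mu:
  assumes mv: "mutual_visibility_set (hypercube_vertices (Suc n)) hypercube_adj X"
  shows "card {x \<in> X. hd x = c} \<le> mu_hypercube n"
proof -
  have "{x \<in> X. hd x = c} \<subseteq> {x \<in> hypercube_vertices (Suc n). hd x = c}"
    using mv by (auto simp: mutual_visibility_set_def)
  then have "inj_on tl {x \<in> X. hd x = c}"
    by (rule inj_on_subset[OF inj_on_tl_same_hd])
  then have "card {x \<in> X. hd x = c} = card (tl ` {x \<in> X. hd x = c})"
    by (simp add: card_image)
  also have "\<dots> \<le> mu_hypercube n"
    unfolding mu_hypercube_def
    by (intro mutual_visibility_set_card_le_mu finite_hypercube_vertices
          mutual_visibility_set_hypercube_half mv)
  finally show ?thesis .
qed

theorem corollary3p2: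
  fixes d :: nat
  assumes "d \<ge> 2"
  shows "mu_hypercube d \<le> 2 * mu_hypercube (d - 1)"
proof -
  obtain n where d: "d = Suc n"
    using assms by (cases d) auto
  obtain X where mv: "mutual_visibility_set (hypercube_vertices (Suc n)) hypercube_adj X"
    and card_X: "card X = mu_hypercube d"
    using mu_attained[OF finite_hypercube_vertices] d unfolding mu_hypercube_def by blast
  have "X = {x \<in> X. hd x = True} \<union> {x \<in> X. hd x = False}"
    by auto
  then have "card X \<le> card {x \<in> X. hd x = True} + card {x \<in> X. hd x = False}"
    by (metis card_Un_le)
  then show ?thesis
    using card_hypercube_half_le_mu[OF mv, of True] card_hypercube_half_le_mu[OF mv, of False]
      card_X d by simp
qed

end
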